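(* Let $a,b\in\mathbb{Z}$ with $\gcd(a,b)=1$ and $a^2+ab-b^2\not\equiv0\pmod5$. Let $m\ge1$ with $5\mid m$, and suppose $\{G_n(a,b)\}$ is complete mod $m$. Then $\{G_n(a,b)\}$ is complete mod $5m$.
   Context: For integers $a,b$ with $\gcd(a,b)=1$, the Gibonacci sequence $\{G_n(a,b)\}_{n\ge1}$ is defined by $G_1=a$, $G_2=b$, $G_{n+1}=G_{n-1}+G_n$. A sequence is complete mod $m$ if every residue class modulo $m$ contains some term of the sequence. *)

theory Defs
  imports "HOL-Number_Theory.Number_Theory"
begin

text \<open>gib_aux a b k = G_(k+1)(a,b), so G_1 = a, G_2 = b.\<close>
fun gib_aux :: "int \<Rightarrow> int \<Rightarrow> nat \<Rightarrow> int" where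
  "gib_aux a b 0 = a"
| "gib_aux a b (Suc 0) = b"
| "gib_aux a b (Suc (Suc k)) = gib_aux a b k + gib_aux a b (Suc k)"

definition G :: "int \<Rightarrow> int \<Rightarrow> nat \<Rightarrow> int" where
  "G a b n = gib_aux a b (n - 1)"

definition complete_mod :: "(nat \<Rightarrow> int) \<Rightarrow> int \<Rightarrow> bool" where
  "complete_mod s m \<longleftrightarrow> (\<forall>r::int. \<exists>n\<ge>1. [s n = r] (mod m))"

end

theory Submission
  imports Defs
begin

text \<open>
  Every integer sequence H satisfying the Fibonacci recurrence is periodic modulo q with a
  period N depending only on q (any multiple of the Pisano period of q), and
  H (n + k N) = H n + k q h n (mod q^2), where h n = (H (n + N) - H n) / q. Hence if some
  period N of m has all h n prime to 5, the terms H (n + k N), k = 0, ..., 4, run through all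
  lifts of H n mod m to residues mod 5 m, and completeness passes from m to 5 m.

  Write m = 5^e m' with m' prime to 5. For a prime p other than 5 the period modulo p divides
  p - 1 if (5/p) = 1, which is incompatible with completeness modulo p, and divides 2 (p + 1)
  if (5/p) = -1, which is prime to 5 by quadratic reciprocity; passing to prime powers only
  multiplies the period by p. So m' has a period prime to 5. Modulo 5^e the period
  20 * 5^(e - 1) has h n = 3 (H (n + 1) - 3 H n) (mod 5), and since
  (x - 3 y)^2 = x^2 - x y - y^2 (mod 5), whose value on consecutive terms is
  +-(a^2 + a b - b^2), this is never divisible by 5.
\<close>

section \<open>Fibonacci-like sequences\<close>

definition fib_like :: "(nat \<Rightarrow> int) \<Rightarrow> bool" where
  "fib_like H \<longleftrightarrow> (\<forall>n. H (Suc (Suc n)) = H n + H (Suc n))"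

definition covers_residues :: "(nat \<Rightarrow> int) \<Rightarrow> int \<Rightarrow> bool" where
  "covers_residues H q \<longleftrightarrow> (\<forall>r. \<exists>n. [H n = r] (mod q))"

lemma covers_residues_dvd: "covers_residues H q \<Longrightarrow> d dvd q \<Longrightarrow> covers_residues H d"
  unfolding covers_residues_def using cong_dvd_modulus by blast

lemma complete_mod_G_iff: "complete_mod (G a b) m \<longleftrightarrow> covers_residues (gib_aux a b) m"
proof -
  have "(\<exists>n\<ge>1. [G a b n = r] (mod m)) \<longleftrightarrow> (\<exists>n. [gib_aux a b n = r] (mod m))" for r
    by (metis G_def diff_Suc_1 le_add1 plus_1_eq_Suc)
  then show ?thesis by (simp add: complete_mod_def covers_residues_def)
qed

lemma fib_likeD: "fib_like H \<Longrightarrow> H (Suc (Suc n)) = H n + H (Suc n)"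
  by (simp add: fib_like_def)

lemma fib_like_gib_aux: "fib_like (gib_aux a b)"
  by (simp add: fib_like_def)

lemma fib_like_shift:
  assumes "fib_like H"
  shows "H (n + Suc k) = int (fib k) * H n + int (fib (Suc k)) * H (Suc n)"
proof (induction k rule: fib.induct)
  case 1 then show ?case by simp
next
  case 2 then show ?case using fib_likeD[OF assms, of n] by simp
next
  case (3 k)
  have "H (n + Suc (Suc (Suc k))) = H (n + Suc k) + H (n + Suc (Suc k))"
    using fib_likeD[OF assms, of "n + Suc k"] by simp
  with 3 show ?case by (simp add: algebra_simps)
qed

lemma gib_aux_Cassini:
  "gib_aux a b (Suc n) ^ 2 - gib_aux a b (Suc n) * gib_aux a b n - gib_aux a b n ^ 2
     = (-1) ^ n * (b^2 - a*b - a^2)"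
proof (induction n)
  case 0 then show ?case by (simp add: algebra_simps)
next
  case (Suc n)
  have "gib_aux a b (Suc (Suc n)) ^ 2 - gib_aux a b (Suc (Suc n)) * gib_aux a b (Suc n)
      - gib_aux a b (Suc n) ^ 2
      = - (gib_aux a b (Suc n) ^ 2 - gib_aux a b (Suc n) * gib_aux a b n - gib_aux a b n ^ 2)"
    by (simp add: algebra_simps power2_eq_square)
  with Suc show ?case by simp
qed

lemma gib_aux_step_not_dvd_5:
  assumes "\<not> [a^2 + a*b - b^2 = 0] (mod 5)"
  shows "\<not> 5 dvd gib_aux a b (Suc n) - 3 * gib_aux a b n"
proof
  let ?x = "gib_aux a b (Suc n)" and ?y = "gib_aux a b n"
  assume "5 dvd ?x - 3 * ?y"
  then have "5 dvd (?x - 3 * ?y)^2" by (simp add: power2_eq_square)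
  moreover have "(?x - 3 * ?y)^2 = (?x^2 - ?x * ?y - ?y^2) + 5 * (2 * ?y^2 - ?x * ?y)"
    by (simp add: algebra_simps power2_eq_square)
  ultimately have "5 dvd (-1) ^ n * (b^2 - a*b - a^2)"
    unfolding gib_aux_Cassini[symmetric] by (metis dvd_add_left_iff dvd_triv_left)
  then have "5 dvd a^2 + a*b - b^2"
    by (cases "even n") (simp_all add: dvd_diff_commute algebra_simps)
  with assms show False by (simp add: cong_0_iff)
qed

section \<open>Periods modulo an integer\<close>

definition fib_period :: "int \<Rightarrow> nat \<Rightarrow> bool" where
  "fib_period q N \<longleftrightarrow> (\<forall>H n. fib_like H \<longrightarrow> [H (n + N) = H n] (mod q))"

lemma fib_periodD: "fib_period q N \<Longrightarrow> fib_like H \<Longrightarrow> [H (n + N) = H n] (mod q)"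
  by (simp add: fib_period_def)

lemma fib_periodI:
  assumes "[int (fib N) = 0] (mod q)" "[int (fib (Suc N)) = 1] (mod q)"
  shows "fib_period q N"
  unfolding fib_period_def
proof (intro allI impI)
  fix H :: "nat \<Rightarrow> int" and n
  assume H: "fib_like H"
  show "[H (n + N) = H n] (mod q)"
  proof (cases N)
    case 0 then show ?thesis by simp
  next
    case (Suc M)
    have "H (n + N) = (int (fib (Suc N)) - int (fib N)) * H n + int (fib N) * H (Suc n)"
      using fib_like_shift[OF H, of n M] Suc by simp
    also have "[\<dots> = (1 - 0) * H n + 0 * H (Suc n)] (mod q)"
      using assms by (intro cong_add cong_mult cong_diff cong_refl)
    finally show ?thesis by simp
  qed
qed

lemma fib_period_double:
  assumes "[int (fib K) = -1] (mod q)" "[int (fib (Suc K)) = 0] (mod q)"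
  shows "fib_period q (2 * Suc K)"
proof -
  have anti: "[H (n + Suc K) = - H n] (mod q)" if "fib_like H" for H n
  proof -
    have "H (n + Suc K) = int (fib K) * H n + int (fib (Suc K)) * H (Suc n)"
      by (rule fib_like_shift[OF that])
    also have "[\<dots> = (-1) * H n + 0 * H (Suc n)] (mod q)"
      using assms by (intro cong_add cong_mult cong_refl)
    finally show ?thesis by simp
  qed
  show ?thesis unfolding fib_period_def
  proof (intro allI impI)
    fix H n
    assume H: "fib_like H"
    have "[H ((n + Suc K) + Suc K) = - H (n + Suc K)] (mod q)" by (rule anti[OF H])
    also have "[- H (n + Suc K) = - (- H n)] (mod q)" by (rule cong_uminus[OF anti[OF H]])
    finally show "[H (n + 2 * Suc K) = H n] (mod q)" by (simp add: mult_2 add.assoc)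
  qed
qed

lemma fib_period_mult: "fib_period q N \<Longrightarrow> fib_period q (k * N)"
proof (induction k)
  case 0 then show ?case by (simp add: fib_period_def)
next
  case (Suc k)
  show ?case unfolding fib_period_def
  proof (intro allI impI)
    fix H n
    assume H: "fib_like H"
    have "[H ((n + k * N) + N) = H (n + k * N)] (mod q)" by (rule fib_periodD[OF Suc.prems H])
    also have "[H (n + k * N) = H n] (mod q)" by (rule fib_periodD[OF Suc.IH[OF Suc.prems] H])
    finally show "[H (n + Suc k * N) = H n] (mod q)" by (simp add: ac_simps)
  qed
qed

lemma fib_period_mult_modulus:
  "fib_period q1 N \<Longrightarrow> fib_period q2 N \<Longrightarrow> coprime q1 q2 \<Longrightarrow> fib_period (q1 * q2) N"
  unfolding fib_period_def by (simp add: coprime_cong_mult)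

definition period_quotient :: "int \<Rightarrow> nat \<Rightarrow> (nat \<Rightarrow> int) \<Rightarrow> nat \<Rightarrow> int" where
  "period_quotient q N H n = (H (n + N) - H n) div q"

lemma period_quotient_eq:
  assumes "fib_period q N" "fib_like H"
  shows "H (n + N) = H n + q * period_quotient q N H n"
  using fib_periodD[OF assms, of n]
  by (simp add: period_quotient_def cong_iff_dvd_diff)

lemma fib_like_period_quotient:
  assumes per: "fib_period q N" and H: "fib_like H"
  shows "fib_like (period_quotient q N H)"
  unfolding fib_like_def
proof
  fix n
  have dvd: "q dvd H (i + N) - H i" for i
    using fib_periodD[OF per H, of i] by (simp add: cong_iff_dvd_diff)
  have "H (Suc (Suc n) + N) - H (Suc (Suc n))
      = (H (n + N) - H n) + (H (Suc n + N) - H (Suc n))"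
    using fib_likeD[OF H, of "n + N"] fib_likeD[OF H, of n] by simp
  then show "period_quotient q N H (Suc (Suc n))
      = period_quotient q N H n + period_quotient q N H (Suc n)"
    unfolding period_quotient_def using div_add[OF dvd[of n] dvd[of "Suc n"]] by simp
qed

lemma period_expansion_cube:
  assumes per: "fib_period q N" and H: "fib_like H"
  defines "Q \<equiv> period_quotient q N H"
  defines "Q2 \<equiv> period_quotient q N Q"
  shows "[H (n + k * N) = H n + int k * q * Q n + (\<Sum>i<k. int i) * q^2 * Q2 n] (mod q^3)"
proof (induction k arbitrary: n)
  case 0 then show ?case by simp
next
  case (Suc k)
  let ?s = "\<Sum>i<k. int i"
  have Q: "fib_like Q" unfolding Q_def by (rule fib_like_period_quotient[OF per H])
  have HQ: "H (n + N) = H n + q * Q n" unfolding Q_def by (rule period_quotient_eq[OF per H])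
  have QQ2: "Q (n + N) = Q n + q * Q2 n" unfolding Q2_def by (rule period_quotient_eq[OF per Q])
  have "q dvd Q2 (n + N) - Q2 n"
    using fib_periodD[OF per fib_like_period_quotient[OF per Q], of n]
    by (simp add: Q2_def cong_iff_dvd_diff)
  then have rest: "[?s * q^2 * (Q2 (n + N) - Q2 n) = 0] (mod q^3)"
    by (simp add: cong_0_iff power_numeral_reduce mult_dvd_mono)
  have "H (n + Suc k * N) = H ((n + N) + k * N)" by (simp add: ac_simps)
  also have "[\<dots> = H (n + N) + int k * q * Q (n + N) + ?s * q^2 * Q2 (n + N)] (mod q^3)"
    by (rule Suc.IH)
  also have "H (n + N) + int k * q * Q (n + N) + ?s * q^2 * Q2 (n + N)
      = H n + int (Suc k) * q * Q n + (?s + int k) * q^2 * Q2 n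
        + ?s * q^2 * (Q2 (n + N) - Q2 n)"
    unfolding HQ QQ2 by (simp add: algebra_simps power2_eq_square)
  also have "[\<dots> = H n + int (Suc k) * q * Q n + (?s + int k) * q^2 * Q2 n + 0] (mod q^3)"
    by (intro cong_add cong_refl rest)
  finally show ?case by simp
qed

lemma period_expansion_sq:
  assumes "fib_period q N" "fib_like H"
  shows "[H (n + k * N) = H n + int k * q * period_quotient q N H n] (mod q^2)"
proof -
  let ?Q = "period_quotient q N H"
  let ?r = "(\<Sum>i<k. int i) * q^2 * period_quotient q N ?Q n"
  have "[H (n + k * N) = H n + int k * q * ?Q n + ?r] (mod q^3)"
    by (rule period_expansion_cube[OF assms])
  then have "[H (n + k * N) = H n + int k * q * ?Q n + ?r] (mod q^2)"
    by (rule cong_dvd_modulus) (simp add: le_imp_power_dvd)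
  also have "[H n + int k * q * ?Q n + ?r = H n + int k * q * ?Q n + 0] (mod q^2)"
    by (intro cong_add cong_refl) (simp add: cong_0_iff)
  finally show ?thesis by simp
qed

lemma fib_period_lift:
  assumes per: "fib_period q N" and "int p dvd q"
  shows "fib_period (int p * q) (p * N)"
  unfolding fib_period_def
proof (intro allI impI)
  fix H n
  assume H: "fib_like H"
  have "int p * q dvd q^2" using assms(2) by (simp add: power2_eq_square)
  then have "[H (n + p * N) = H n + int p * q * period_quotient q N H n] (mod int p * q)"
    using period_expansion_sq[OF per H] by (rule cong_dvd_modulus[rotated])
  also have "[H n + int p * q * period_quotient q N H n = H n + 0] (mod int p * q)"
    by (intro cong_add cong_refl) (simp add: cong_0_iff)
  finally show "[H (n + p * N) = H n] (mod int p * q)" by simp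
qed

lemma fib_period_not_covers:
  assumes per: "fib_period q N" and "0 < N" "int N < q" and H: "fib_like H"
  shows "\<not> covers_residues H q"
proof
  assume "covers_residues H q"
  then have cover: "\<forall>r. \<exists>n. [H n = r] (mod q)" by (simp add: covers_residues_def)
  have "{0..<q} \<subseteq> (\<lambda>i. H i mod q) ` {..<N}"
  proof
    fix r assume r: "r \<in> {0..<q}"
    obtain n where "[H n = r] (mod q)" using cover by blast
    moreover have "[H (n mod N + n div N * N) = H (n mod N)] (mod q)"
      by (rule fib_periodD[OF fib_period_mult[OF per] H])
    ultimately have "H (n mod N) mod q = r"
      using r by (simp add: cong_def)
    then show "r \<in> (\<lambda>i. H i mod q) ` {..<N}"
      using \<open>0 < N\<close> by (intro image_eqI[of _ _ "n mod N"]) auto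
  qed
  then have "card {0..<q} \<le> card ((\<lambda>i. H i mod q) ` {..<N})"
    by (intro card_mono) auto
  also have "\<dots> \<le> N" using card_image_le[of "{..<N}"] by simp
  finally show False using \<open>int N < q\<close> by simp
qed

section \<open>Fibonacci numbers modulo a prime\<close>

lemma fib_binomial:
  "2 ^ n * int (fib n) = 2 * (\<Sum>k\<le>n. int (n choose k) * (if odd k then 5 ^ (k div 2) else 0))"
proof -
  define s where "s = sqrt (5::real)"
  define t :: "nat \<Rightarrow> real" where "t k = (if odd k then 5 ^ (k div 2) else 0)" for k
  have s0: "s \<noteq> 0" unfolding s_def by simp
  have odd_powers: "s ^ k - (- s) ^ k = 2 * s * t k" for k
  proof (cases "even k")
    case False
    then obtain j where k: "k = 2 * j + 1" by (metis oddE)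
    have "s ^ k = s * 5 ^ j" unfolding k s_def power_add power_mult by simp
    with False show ?thesis by (simp add: t_def k)
  qed (simp add: t_def)
  have "(1 + s) ^ n - (1 - s) ^ n = (\<Sum>k\<le>n. real (n choose k) * (s ^ k - (- s) ^ k))"
    using binomial_ring[of s 1 n] binomial_ring[of "- s" 1 n]
    by (simp add: add.commute sum_subtractf[symmetric] algebra_simps)
  also have "\<dots> = 2 * s * (\<Sum>k\<le>n. real (n choose k) * t k)"
    unfolding odd_powers by (simp add: sum_distrib_left algebra_simps)
  finally have binomial_diff:
    "(1 + s) ^ n - (1 - s) ^ n = 2 * s * (\<Sum>k\<le>n. real (n choose k) * t k)" .
  have "real (fib n) = (((1 + s) / 2) ^ n - ((1 - s) / 2) ^ n) / s"
    unfolding s_def by (rule fib_closed_form)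
  then have "2 ^ n * real (fib n) * s = (1 + s) ^ n - (1 - s) ^ n"
    using s0 by (simp add: power_divide field_simps)
  then have "2 ^ n * real (fib n) = 2 * (\<Sum>k\<le>n. real (n choose k) * t k)"
    using s0 unfolding binomial_diff by (simp add: mult_ac)
  then have "real_of_int (2 ^ n * int (fib n))
      = real_of_int (2 * (\<Sum>k\<le>n. int (n choose k) * (if odd k then 5 ^ (k div 2) else 0)))"
    by (simp add: t_def of_int_sum if_distrib cong: if_cong)
  then show ?thesis by (rule of_int_eq_iff[THEN iffD1])
qed

lemma prime_choose_cong:
  assumes "prime p"
  shows "[int (p choose k) = of_bool (k \<in> {0, p})] (mod int p)"
proof -
  consider "k = 0 \<or> k = p" | "0 < k \<and> k < p" | "p < k" by linarith
  then show ?thesis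
  proof cases
    case 2
    then have "p dvd p choose k" using assms by (intro dvd_choose_prime) auto
    with 2 show ?thesis by (simp add: cong_0_iff)
  qed (auto simp: binomial_eq_0)
qed

lemma prime_Suc_choose_cong:
  assumes "prime p"
  shows "[int (Suc p choose k) = of_bool (k \<in> {0, 1, p, Suc p})] (mod int p)"
proof (cases k)
  case (Suc j)
  have p2: "p \<ge> 2" using prime_ge_2_nat[OF assms] .
  have "int (Suc p choose k) = int (p choose j) + int (p choose Suc j)" using Suc by simp
  also have "[\<dots> = of_bool (j \<in> {0, p}) + of_bool (Suc j \<in> {0, p})] (mod int p)"
    using assms by (intro cong_add prime_choose_cong)
  also have "of_bool (j \<in> {0, p}) + of_bool (Suc j \<in> {0, p}) = (of_bool (k \<in> {0, 1, p, Suc p}) :: int)"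
    using Suc p2 by auto
  finally show ?thesis .
qed simp

lemma fib_prime_cong:
  assumes "prime p" "odd p"
  defines "e \<equiv> (5::int) ^ ((p - 1) div 2)"
  shows "[int (fib p) = e] (mod int p)" and "[2 * int (fib (Suc p)) = 1 + e] (mod int p)"
proof -
  define t :: "nat \<Rightarrow> int" where "t k = (if odd k then 5 ^ (k div 2) else 0)" for k
  have p3: "p \<ge> 3" using assms prime_ge_2_nat[OF assms(1)] by presburger
  have t_p: "t p = e" using assms(2) unfolding t_def e_def by (elim oddE) simp
  have "\<not> p dvd 2" using p3 by (auto dest: dvd_imp_le)
  then have "[2 ^ (p - 1) = 1] (mod p)" by (rule fermat_theorem[OF assms(1)])
  then have "[2 ^ (p - 1) = 1] (mod int p)" by (metis cong_int_iff of_nat_1 of_nat_numeral of_nat_power)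
  then have "[2 * 2 ^ (p - 1) = 2 * 1] (mod int p)" by (rule cong_scalar_left)
  then have "[2 ^ p = 2] (mod int p)" using p3 by (simp add: power_eq_if)
  then have fermat: "[2 ^ p * x = 2 * x] (mod int p)" for x by (rule cong_mult[OF _ cong_refl])
  have coprime2: "coprime 2 (int p)" using assms by (simp add: coprime_commute)
  have "[2 * int (fib p) = 2 ^ p * int (fib p)] (mod int p)" by (rule cong_sym[OF fermat])
  also have "2 ^ p * int (fib p) = 2 * (\<Sum>k\<le>p. int (p choose k) * t k)"
    unfolding t_def by (rule fib_binomial)
  also have "[\<dots> = 2 * (\<Sum>k\<le>p. of_bool (k \<in> {0, p}) * t k)] (mod int p)"
    using assms(1) by (intro cong_mult cong_refl cong_sum prime_choose_cong)
  also have "(\<Sum>k\<le>p. of_bool (k \<in> {0, p}) * t k) = (\<Sum>k\<in>{..p} \<inter> {0, p}. t k)"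
    unfolding sum.inter_restrict[OF finite_atMost] by (rule sum.cong) auto
  also have "{..p} \<inter> {0, p} = {0, p}" by auto
  also have "(\<Sum>k\<in>{0, p}. t k) = e" using p3 t_p by (simp add: t_def)
  finally show "[int (fib p) = e] (mod int p)" by (rule cong_mult_lcancel[OF coprime2, THEN iffD1])
  have "[2 * (2 * int (fib (Suc p))) = 2 ^ Suc p * int (fib (Suc p))] (mod int p)"
    using cong_scalar_left[OF fermat, of 2] by (simp add: cong_sym_eq mult.assoc)
  also have "2 ^ Suc p * int (fib (Suc p)) = 2 * (\<Sum>k\<le>Suc p. int (Suc p choose k) * t k)"
    unfolding t_def by (rule fib_binomial)
  also have "[\<dots> = 2 * (\<Sum>k\<le>Suc p. of_bool (k \<in> {0, 1, p, Suc p}) * t k)] (mod int p)"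
    using assms(1) by (intro cong_mult cong_refl cong_sum prime_Suc_choose_cong)
  also have "(\<Sum>k\<le>Suc p. of_bool (k \<in> {0, 1, p, Suc p}) * t k)
      = (\<Sum>k\<in>{..Suc p} \<inter> {0, 1, p, Suc p}. t k)"
    unfolding sum.inter_restrict[OF finite_atMost] by (rule sum.cong) auto
  also have "{..Suc p} \<inter> {0, 1, p, Suc p} = {0, 1, p, Suc p}" by auto
  also have "(\<Sum>k\<in>{0, 1, p, Suc p}. t k) = 1 + e" using p3 t_p assms(2) by (simp add: t_def)
  finally show "[2 * int (fib (Suc p)) = 1 + e] (mod int p)"
    by (rule cong_mult_lcancel[OF coprime2, THEN iffD1])
qed

lemma fib_prime_Legendre:
  assumes "prime p" "p > 2"
  shows "[int (fib p) = Legendre 5 (int p)] (mod int p)"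
    and "[2 * int (fib (Suc p)) = 1 + Legendre 5 (int p)] (mod int p)"
proof -
  have Euler: "[5 ^ ((p - 1) div 2) = Legendre 5 (int p)] (mod int p)"
    using euler_criterion[OF assms] by (rule cong_sym)
  note fib_p = fib_prime_cong[OF assms(1) prime_odd_nat[OF assms]]
  show "[int (fib p) = Legendre 5 (int p)] (mod int p)"
    using fib_p(1) Euler by (rule cong_trans)
  show "[2 * int (fib (Suc p)) = 1 + Legendre 5 (int p)] (mod int p)"
    using fib_p(2) cong_add[OF cong_refl Euler] by (rule cong_trans)
qed

lemma prime_five: "prime (5::nat)" "prime (5::int)"
  by code_simp+

lemma Legendre_5_neg_imp_not_dvd_Suc:
  assumes "prime p" "p > 2" "Legendre 5 (int p) = -1"
  shows "\<not> 5 dvd Suc p"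
proof
  assume "5 dvd Suc p"
  then have p4: "int p mod 5 = 4" by presburger
  then have "p \<noteq> 5" by auto
  have "QuadRes 5 (int p)"
    unfolding QuadRes_def by (rule exI[of _ 2]) (use p4 in \<open>simp add: cong_def\<close>)
  moreover have "\<not> [int p = 0] (mod 5)" using p4 by (simp add: cong_def)
  ultimately have "Legendre (int p) 5 = 1" by (simp add: Legendre_def)
  moreover have "Legendre (int p) (int 5) * Legendre (int 5) (int p)
      = (-1) ^ ((p - 1) div 2 * ((5 - 1) div 2))"
    using assms \<open>p \<noteq> 5\<close> prime_five(1) by (intro Quadratic_Reciprocity) auto
  ultimately show False using assms(3) by simp
qed

lemma fib_period_Legendre_5_pos:
  assumes "prime p" "p > 2" "Legendre 5 (int p) = 1"
  shows "fib_period (int p) (p - 1)"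
proof (rule fib_periodI)
  note fib_p = fib_prime_Legendre[OF assms(1,2), unfolded assms(3)]
  have "coprime 2 (int p)" using prime_odd_nat[OF assms(1,2)] by simp
  moreover have "[2 * int (fib (Suc p)) = 2 * 1] (mod int p)" using fib_p(2) by simp
  ultimately have "[int (fib (Suc p)) = 1] (mod int p)" using cong_mult_lcancel by blast
  then have "[int (fib (Suc p)) - int (fib p) = 1 - 1] (mod int p)" using fib_p(1) by (rule cong_diff)
  moreover have "int (fib (p - 1)) = int (fib (Suc p)) - int (fib p)"
    using assms(2) by (cases p) simp_all
  ultimately show "[int (fib (p - 1)) = 0] (mod int p)" by simp
  show "[int (fib (Suc (p - 1))) = 1] (mod int p)" using fib_p(1) assms(2) by simp
qed

lemma fib_period_Legendre_5_neg:
  assumes "prime p" "p > 2" "Legendre 5 (int p) = -1"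
  shows "fib_period (int p) (2 * Suc p)"
proof (rule fib_period_double)
  note fib_p = fib_prime_Legendre[OF assms(1,2), unfolded assms(3)]
  show "[int (fib p) = -1] (mod int p)" using fib_p(1) by simp
  have "coprime 2 (int p)" using prime_odd_nat[OF assms(1,2)] by simp
  moreover have "[2 * int (fib (Suc p)) = 2 * 0] (mod int p)" using fib_p(2) by simp
  ultimately show "[int (fib (Suc p)) = 0] (mod int p)" using cong_mult_lcancel by blast
qed

lemma fib_period_prime:
  assumes p: "prime p" "p \<noteq> 5" and H: "fib_like H" and cover: "covers_residues H (int p)"
  shows "\<exists>N. fib_period (int p) N \<and> \<not> 5 dvd N"
proof (cases "p = 2")
  case True
  have "fib_period 2 3" by (rule fib_periodI) (simp_all add: cong_def eval_nat_numeral)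
  with True show ?thesis by (intro exI[of _ 3]) simp
next
  case False
  then have p2: "p > 2" using prime_ge_2_nat[OF p(1)] by simp
  have "\<not> p dvd 5" using p prime_five(1) primes_dvd_imp_eq by blast
  then have "\<not> [5 = 0] (mod int p)" using int_dvd_int_iff[of p 5] by (simp add: cong_0_iff)
  then consider "Legendre 5 (int p) = 1" | "Legendre 5 (int p) = -1"
    by (cases "QuadRes (int p) 5") (simp_all add: Legendre_def)
  then show ?thesis
  proof cases
    case 1
    have "\<not> covers_residues H (int p)"
      using fib_period_Legendre_5_pos[OF p(1) p2 1] p2 fib_period_not_covers[OF _ _ _ H] by simp
    with cover show ?thesis by blast
  next
    case 2
    have "\<not> 5 dvd 2 * Suc p" using Legendre_5_neg_imp_not_dvd_Suc[OF p(1) p2 2] by presburger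
    with fib_period_Legendre_5_neg[OF p(1) p2 2] show ?thesis by blast
  qed
qed

lemma fib_period_prime_mult:
  assumes p: "prime p" "\<not> 5 dvd p" and H: "fib_like H" and cover: "covers_residues H p"
    and N1: "fib_period x N1" "\<not> 5 dvd N1"
  shows "\<exists>N. fib_period (p * x) N \<and> \<not> 5 dvd N"
proof -
  have "p > 0" using p(1) prime_gt_0_int by blast
  then have p_nat: "prime (nat p)" "\<not> 5 dvd nat p" "int (nat p) = p"
    using p int_dvd_int_iff[of 5 "nat p"] by (simp_all add: prime_int_iff)
  show ?thesis
  proof (cases "p dvd x")
    case True
    have "fib_period (int (nat p) * x) (nat p * N1)"
      using N1(1) True p_nat(3) by (intro fib_period_lift) simp_all
    moreover have "\<not> 5 dvd nat p * N1"
      using p_nat(2) N1(2) prime_five(1) by (simp add: prime_dvd_mult_iff)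
    ultimately show ?thesis using p_nat(3) by auto
  next
    case False
    have "nat p \<noteq> 5" using p_nat(2) by auto
    then obtain N2 where N2: "fib_period p N2" "\<not> 5 dvd N2"
      using fib_period_prime[OF p_nat(1) _ H] cover p_nat(3) by auto
    have "fib_period (p * x) (N2 * N1)"
      using fib_period_mult[OF N2(1), of N1] fib_period_mult[OF N1(1), of N2]
        prime_imp_coprime[OF p(1) False]
      by (intro fib_period_mult_modulus) (simp_all add: mult.commute)
    moreover have "\<not> 5 dvd N2 * N1" using N1(2) N2(2) prime_five(1) by (simp add: prime_dvd_mult_iff)
    ultimately show ?thesis by blast
  qed
qed

lemma fib_period_not_dvd_5:
  assumes H: "fib_like H" and "q > 0" "\<not> 5 dvd q" "covers_residues H q"
  shows "\<exists>N. fib_period q N \<and> \<not> 5 dvd N"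
  using assms(2-)
proof (induction q rule: prime_divisors_induct)
  case zero then show ?case by simp
next
  case (unit q)
  then have "q = 1" by (auto simp: zdvd1_eq)
  then show ?case by (intro exI[of _ 1]) (simp add: fib_period_def)
next
  case (factor p x)
  have "p > 0" using factor.hyps prime_gt_0_int by blast
  then have "x > 0" "\<not> 5 dvd x" "covers_residues H x"
    using factor.prems by (auto simp: zero_less_mult_iff intro: covers_residues_dvd)
  then obtain N1 where "fib_period x N1" "\<not> 5 dvd N1" using factor.IH by blast
  moreover have "\<not> 5 dvd p" using factor.prems(2) by (auto intro: dvd_mult2)
  moreover have "covers_residues H p" using factor.prems(3) by (rule covers_residues_dvd) simp
  ultimately show ?case using fib_period_prime_mult[OF factor.hyps _ H] by blast
qed

section \<open>Periods modulo powers of 5\<close>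

definition five_power_period :: "nat \<Rightarrow> nat \<Rightarrow> bool" where
  "five_power_period j N \<longleftrightarrow> fib_period (5 ^ j) N \<and>
     (\<forall>H n. fib_like H \<longrightarrow> [period_quotient (5 ^ j) N H n = 3 * (H (Suc n) - 3 * H n)] (mod 5))"

lemma five_power_period_20: "five_power_period 1 20"
proof -
  have shift: "H (n + 20) - H n = 5 * (836 * H n + 1353 * H (Suc n))" if "fib_like H" for H n
  proof -
    have "fib 19 = 4181" "fib 20 = 6765" by code_simp+
    then show ?thesis using fib_like_shift[OF that, of n 19] by simp
  qed
  show ?thesis unfolding five_power_period_def
  proof (intro conjI allI impI)
    show "fib_period (5 ^ 1) 20"
      unfolding fib_period_def cong_iff_dvd_diff by (simp add: shift)
  next
    fix H n
    assume H: "fib_like H"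
    have "period_quotient (5 ^ 1) 20 H n = 836 * H n + 1353 * H (Suc n)"
      unfolding period_quotient_def by (simp add: shift[OF H])
    also have "[\<dots> = 3 * (H (Suc n) - 3 * H n)] (mod 5)"
      unfolding cong_iff_dvd_diff by (rule dvdI[of _ _ "169 * H n + 270 * H (Suc n)"]) simp
    finally show "[period_quotient (5 ^ 1) 20 H n = 3 * (H (Suc n) - 3 * H n)] (mod 5)" .
  qed
qed

lemma period_expansion_five:
  assumes per: "fib_period q N" and H: "fib_like H" and "5 dvd q"
  shows "[H (n + 5 * N) = H n + 5 * q * period_quotient q N H n] (mod 25 * q)"
proof -
  let ?Q2 = "period_quotient q N (period_quotient q N H) n"
  obtain r where r: "q = 5 * r" using \<open>5 dvd q\<close> by (rule dvdE)
  have q3: "25 * q dvd q ^ 3"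
    by (rule dvdI[of _ _ "r ^ 2"]) (simp add: r power2_eq_square power3_eq_cube)
  have q2: "25 * q dvd 10 * q ^ 2"
    by (rule dvdI[of _ _ "2 * r"]) (simp add: r power2_eq_square)
  have "(\<Sum>i<5. int i) = 10" by (simp add: eval_nat_numeral)
  then have "[H (n + 5 * N) = H n + 5 * q * period_quotient q N H n + 10 * q^2 * ?Q2] (mod q^3)"
    using period_expansion_cube[OF per H, of n 5] by simp
  then have "[H (n + 5 * N) = H n + 5 * q * period_quotient q N H n + 10 * q^2 * ?Q2] (mod 25 * q)"
    using q3 by (rule cong_dvd_modulus)
  also have "[H n + 5 * q * period_quotient q N H n + 10 * q^2 * ?Q2
      = H n + 5 * q * period_quotient q N H n + 0] (mod 25 * q)"
    using q2 by (intro cong_add cong_refl) (simp add: cong_0_iff dvd_mult2)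
  finally show ?thesis by simp
qed

lemma five_power_period_Suc:
  assumes five: "five_power_period j N" and "j \<ge> 1"
  shows "five_power_period (Suc j) (5 * N)"
proof -
  define q :: int where "q = 5 ^ j"
  have per: "fib_period q N" using five by (simp add: five_power_period_def q_def)
  have "5 dvd q" unfolding q_def using \<open>j \<ge> 1\<close> by (intro dvd_power) simp
  have expand: "\<exists>t. H (n + 5 * N) - H n = (5 * q) * (period_quotient q N H n + 5 * t)"
    if "fib_like H" for H n
  proof -
    have "25 * q dvd H (n + 5 * N) - (H n + 5 * q * period_quotient q N H n)"
      using period_expansion_five[OF per that \<open>5 dvd q\<close>, of n] by (simp only: cong_iff_dvd_diff)
    then obtain t where "H (n + 5 * N) - (H n + 5 * q * period_quotient q N H n) = 25 * q * t"
      unfolding dvd_def by blast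
    then show ?thesis by (intro exI[of _ t]) (simp add: algebra_simps)
  qed
  have "q \<noteq> 0" unfolding q_def by simp
  show ?thesis unfolding five_power_period_def power_Suc q_def[symmetric]
  proof (intro conjI allI impI)
    show "fib_period (5 * q) (5 * N)"
      unfolding fib_period_def cong_iff_dvd_diff
    proof (intro allI impI)
      fix H n
      assume "fib_like H"
      then obtain t where "H (n + 5 * N) - H n = (5 * q) * (period_quotient q N H n + 5 * t)"
        using expand by blast
      then show "5 * q dvd H (n + 5 * N) - H n" by simp
    qed
  next
    fix H n
    assume H: "fib_like H"
    obtain t where t: "H (n + 5 * N) - H n = (5 * q) * (period_quotient q N H n + 5 * t)"
      using expand[OF H] by blast
    have "period_quotient (5 * q) (5 * N) H n = period_quotient q N H n + 5 * t"
      unfolding period_quotient_def t using \<open>q \<noteq> 0\<close> by simp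
    also have "[\<dots> = period_quotient q N H n + 0] (mod 5)"
      by (intro cong_add cong_refl) (simp add: cong_0_iff)
    also have "[period_quotient q N H n + 0 = 3 * (H (Suc n) - 3 * H n)] (mod 5)"
      using five H by (simp add: five_power_period_def q_def)
    finally show "[period_quotient (5 * q) (5 * N) H n = 3 * (H (Suc n) - 3 * H n)] (mod 5)" .
  qed
qed

lemma five_power_period_pow: "j \<ge> 1 \<Longrightarrow> five_power_period j (20 * 5 ^ (j - 1))"
proof (induction j rule: nat_induct_at_least)
  case base
  then show ?case using five_power_period_20 by simp
next
  case (Suc j)
  have "(20 * 5 ^ (Suc j - 1) :: nat) = 5 * (20 * 5 ^ (j - 1))"
    using Suc.hyps by (cases j) simp_all
  then show ?case using five_power_period_Suc[OF Suc.IH Suc.hyps] by (simp only:)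
qed

section \<open>Lifting completeness from m to 5m\<close>

lemma covers_residues_mult_prime:
  assumes H: "fib_like H" and per: "fib_period m N" and p: "prime p" "p dvd m"
    and unit: "\<And>n. \<not> p dvd period_quotient m N H n"
    and cover: "covers_residues H m"
  shows "covers_residues H (p * m)"
  unfolding covers_residues_def
proof
  fix r
  obtain i where "[H i = r] (mod m)" using cover by (auto simp: covers_residues_def)
  then have "m dvd r - H i" by (simp add: cong_iff_dvd_diff dvd_diff_commute)
  then obtain t where "r - H i = m * t" unfolding dvd_def by blast
  then have t: "r = H i + m * t" by simp
  let ?h = "period_quotient m N H i"
  have "coprime ?h p" using prime_imp_coprime[OF p(1) unit] by (simp add: coprime_commute)
  then obtain x where x: "[?h * x = 1] (mod p)" using cong_solve_coprime_int by blast
  define k where "k = nat ((t * x) mod p)"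
  have "[int k = t * x] (mod p)"
    using prime_gt_0_int[OF p(1)] by (simp add: k_def cong_def)
  then have "[int k * ?h = t * (?h * x)] (mod p)"
    using cong_mult[OF _ cong_refl, of "int k" "t * x" p ?h] by (simp add: ac_simps)
  also have "[t * (?h * x) = t * 1] (mod p)" using x by (rule cong_scalar_left)
  finally have "[m * (int k * ?h) = m * t] (mod m * p)" by (simp add: cong_cmult_leftI)
  have "[H (i + k * N) = H i + int k * m * ?h] (mod m^2)" by (rule period_expansion_sq[OF per H])
  then have "[H (i + k * N) = H i + int k * m * ?h] (mod p * m)"
    by (rule cong_dvd_modulus) (use p(2) in \<open>simp add: power2_eq_square\<close>)
  also have "H i + int k * m * ?h = H i + m * (int k * ?h)" by (simp add: ac_simps)
  also have "[H i + m * (int k * ?h) = H i + m * t] (mod p * m)"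
    using \<open>[m * (int k * ?h) = m * t] (mod m * p)\<close> by (intro cong_add cong_refl) (simp add: ac_simps)
  finally show "\<exists>n. [H n = r] (mod p * m)" using t by blast
qed

lemma period_quotient_not_dvd_5:
  assumes H: "fib_like H" and step: "\<And>n. \<not> 5 dvd H (Suc n) - 3 * H n"
    and five: "five_power_period e N" "e \<ge> 1"
    and per: "fib_period (5 ^ e * m') (M * N)" and M: "\<not> 5 dvd M"
  shows "\<not> 5 dvd period_quotient (5 ^ e * m') (M * N) H n"
proof
  define q :: int where "q = 5 ^ e"
  let ?h = "period_quotient (q * m') (M * N) H n"
  let ?Q = "period_quotient q N H n"
  assume "5 dvd period_quotient (5 ^ e * m') (M * N) H n"
  then have h5: "5 dvd ?h" by (simp add: q_def)
  have perq: "fib_period q N" using five(1) by (simp add: five_power_period_def q_def)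
  have "H (n + M * N) = H n + q * (m' * ?h)"
    using period_quotient_eq[OF per H] by (simp add: q_def ac_simps)
  moreover have "[H (n + M * N) = H n + int M * q * ?Q] (mod q^2)"
    by (rule period_expansion_sq[OF perq H])
  ultimately have "q * q dvd q * (m' * ?h - int M * ?Q)"
    by (simp add: cong_iff_dvd_diff power2_eq_square algebra_simps)
  then have "q dvd m' * ?h - int M * ?Q" by (simp add: q_def)
  moreover have "5 dvd q" using five(2) by (simp add: q_def dvd_power)
  ultimately have "5 dvd m' * ?h - int M * ?Q" by (rule dvd_trans[rotated])
  with h5 have "5 dvd int M * ?Q" using dvd_diff[of 5 "m' * ?h"] by fastforce
  moreover have "\<not> 5 dvd int M" using M int_dvd_int_iff[of 5 M] by simp
  ultimately have "5 dvd ?Q" using prime_five(2) by (simp add: prime_dvd_mult_iff)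
  moreover have "5 dvd ?Q - 3 * (H (Suc n) - 3 * H n)"
    using five(1) H by (simp only: five_power_period_def q_def cong_iff_dvd_diff)
  ultimately have "5 dvd 3 * (H (Suc n) - 3 * H n)" using dvd_diff[of 5 ?Q] by fastforce
  then show False
    using step[of n] prime_dvd_mult_iff[OF prime_five(2), of 3 "H (Suc n) - 3 * H n"] by simp
qed

lemma fib_period_unit_quotients:
  assumes H: "fib_like H" and step: "\<And>n. \<not> 5 dvd H (Suc n) - 3 * H n"
    and "m > 0" "5 dvd m" and cover: "covers_residues H m"
  obtains N where "fib_period m N" "\<And>n. \<not> 5 dvd period_quotient m N H n"
proof -
  define e where "e = multiplicity 5 m"
  obtain m' where m: "m = 5 ^ e * m'" and "\<not> 5 dvd m'"
    using multiplicity_decompose'[of m 5] \<open>m > 0\<close> unfolding e_def by auto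
  have "e \<ge> 1" using multiplicity_gt_zero_iff[of m 5] \<open>m > 0\<close> \<open>5 dvd m\<close> by (simp add: e_def)
  have "m' > 0" using m \<open>m > 0\<close> by (simp add: zero_less_mult_iff)
  have "covers_residues H m'" using covers_residues_dvd[OF cover] m by simp
  then obtain N1 where N1: "fib_period m' N1" "\<not> 5 dvd N1"
    using fib_period_not_dvd_5[OF H \<open>m' > 0\<close> \<open>\<not> 5 dvd m'\<close>] by blast
  define N5 :: nat where "N5 = 20 * 5 ^ (e - 1)"
  have five: "five_power_period e N5" unfolding N5_def by (rule five_power_period_pow[OF \<open>e \<ge> 1\<close>])
  have "coprime (5 ^ e) m'" using \<open>\<not> 5 dvd m'\<close> prime_five(2) by (simp add: prime_imp_coprime)
  then have per: "fib_period m (N1 * N5)" unfolding m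
    using fib_period_mult[OF N1(1), of N5] fib_period_mult[of "5 ^ e" N5 N1] five
    by (intro fib_period_mult_modulus) (simp_all add: five_power_period_def mult.commute)
  moreover have "\<not> 5 dvd period_quotient m (N1 * N5) H n" for n
    using period_quotient_not_dvd_5[OF H step five \<open>e \<ge> 1\<close>] per N1(2) m by simp
  ultimately show ?thesis by (rule that)
qed

theorem mainTheorem18:
  fixes a b m :: int
  assumes "gcd a b = 1"
    and "\<not> [a^2 + a*b - b^2 = 0] (mod 5)"
    and "m \<ge> 1" and "5 dvd m"
    and "complete_mod (G a b) m"
  shows "complete_mod (G a b) (5*m)"
proof -
  let ?H = "gib_aux a b"
  have H: "fib_like ?H" by (rule fib_like_gib_aux)
  have cover: "covers_residues ?H m" using assms(5) by (simp add: complete_mod_G_iff)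
  obtain N where per: "fib_period m N" and unit: "\<And>n. \<not> 5 dvd period_quotient m N ?H n"
    using fib_period_unit_quotients[OF H gib_aux_step_not_dvd_5[OF assms(2)] _ assms(4) cover]
      assms(3) by auto
  have "covers_residues ?H (5 * m)"
    by (rule covers_residues_mult_prime[OF H per prime_five(2) assms(4) unit cover])
  then show ?thesis by (simp add: complete_mod_G_iff)
qed

end
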